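(* There is an absolute constant $C$ such that the following holds. Let $D$ be a positive integer that is not a perfect square and let $1\le j\le 2p$. Then there is a sequence $(\tilde Q_k,V_k)$, $k=0,1,\dots,K$, of reduced forms $\tilde Q_k$ of determinant $D$ and integer $2\times2$ matrices $V_k$ such that: (i) $\tilde Q_0=\tilde I$ and $V_0$ is the identity matrix; (ii) each pair $(\tilde Q_{k+1},V_{k+1})$ is obtained from earlier pairs by a transformation of one of two types. Type I: $\tilde Q_{k+1}$ is the right neighbor of $\tilde Q_k$, $\tilde Q_{k+1}=S_{k+1}^t\tilde Q_kS_{k+1}$, $V_{k+1}=V_kS_{k+1}$, and $\log\|S_{k+1}\|\le\frac12\log D$. Type II: $\tilde Q_{k+1}=\tilde Q_{k_1}\circ\tilde Q_{k_2}$ via a bilinear matrix $B_{k+1}$ for some $0\le k_1,k_2\le k$, $V_{k+1}B_{k+1}=B_0(V_{k_1}\otimes V_{k_2})$, and $\log\|B_{k+1}\|\le C\log D$; (iii) $\tilde Q_K=Q^{(j)}$ and $V_K=L_j$. Moreover the length satisfies $K\le C(\log D)^2$.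
   Context: Forms $[a,2b,c]$ mean $ax_1^2+2bx_1x_2+cx_2^2$ with matrix $\begin{pmatrix} a&b\\ b&c\end{pmatrix}$, determinant $b^2-ac$. Reduced form of determinant $D$: $0<b<\sqrt D$, $\sqrt D-b<|a|<\sqrt D+b$. $\tilde I=[1,2\lambda,\lambda^2-D]$ with $\lambda=\lfloor\sqrt D\rfloor$. The right neighbor of a reduced $Q_1=[a_1,2b_1,c_1]$ is $S^tQ_1S$ with $S=\begin{pmatrix}0&1\\-1&\mu\end{pmatrix}$, $\mu$ the integer with $-\sqrt D-b_1<\mu c_1<-\sqrt D-b_1+|c_1|$. Principal cycle: $Q^{(0)}=\tilde I$, $Q^{(j)}$ the right neighbor of $Q^{(j-1)}$, $S^{(j)}$ the corresponding matrix, $L_j=S^{(1)}\cdots S^{(j)}$; $2p$ is the least positive period of $(Q^{(j)})$. $B_0=\begin{pmatrix}1&0&0&D-\lambda^2\\0&1&1&2\lambda\end{pmatrix}$. Composition $Q_3=Q_1\circ Q_2$ via a $2\times4$ integer matrix $B$: $(x^tQ_1x)(y^tQ_2y)=z^tB^tQ_3Bz$ identically with $z=(x_1y_1,x_1y_2,x_2y_1,x_2y_2)^t$, $B$ unimodular (six $2\times2$ minors $\Delta_{ik}$, columns $i<k$, with gcd 1) and oriented ($a_1\Delta_{12}>0$, $a_2\Delta_{13}>0$, $a_i$ the leading coefficient of $Q_i$). $\otimes$ is the Kronecker product; $\|M\|$ is the maximal absolute value of the entries. Logarithms: $\log x=\log_2|x|$ if $|x|\ge4$, and $\log x=2$ if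 $|x|<4$. *)

theory Defs
  imports Complex_Main "Jordan_Normal_Form.Matrix"
begin

text \<open>A binary form [a,2b,c] is represented by the triple (a,b,c); its matrix is [[a,b],[b,c]].\<close>
type_synonym form = "int \<times> int \<times> int"

definition fmat :: "form \<Rightarrow> int mat" where
  "fmat Q = (case Q of (a,b,c) \<Rightarrow>
     mat 2 2 (\<lambda>(i,k). if i = 0 \<and> k = 0 then a else if i = 1 \<and> k = 1 then c else b))"

definition mat_form :: "int mat \<Rightarrow> form" where
  "mat_form M = (M $$ (0,0), M $$ (0,1), M $$ (1,1))"

definition lead :: "form \<Rightarrow> int" where "lead Q = fst Q"

definition fdet :: "form \<Rightarrow> int" where
  "fdet Q = (case Q of (a,b,c) \<Rightarrow> b^2 - a*c)"

definition reduced :: "int \<Rightarrow> form \<Rightarrow> bool" where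
  "reduced D Q = (case Q of (a,b,c) \<Rightarrow>
     fdet Q = D \<and> 0 < b \<and> real_of_int b < sqrt (real_of_int D) \<and>
     sqrt (real_of_int D) - b < \<bar>real_of_int a\<bar> \<and> \<bar>real_of_int a\<bar> < sqrt (real_of_int D) + b)"

definition lam :: "int \<Rightarrow> int" where "lam D = \<lfloor>sqrt (real_of_int D)\<rfloor>"

definition Itilde :: "int \<Rightarrow> form" where "Itilde D = (1, lam D, (lam D)^2 - D)"

definition rn_mu :: "int \<Rightarrow> form \<Rightarrow> int" where
  "rn_mu D Q = (case Q of (a,b,c) \<Rightarrow>
     THE \<mu>::int. - sqrt (real_of_int D) - b < real_of_int (\<mu> * c) \<and>
                 real_of_int (\<mu> * c) < - sqrt (real_of_int D) - b + \<bar>real_of_int c\<bar>)"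

definition rn_S :: "int \<Rightarrow> form \<Rightarrow> int mat" where
  "rn_S D Q = mat_of_rows_list 2 [[0, 1], [-1, rn_mu D Q]]"

definition right_nb :: "int \<Rightarrow> form \<Rightarrow> form" where
  "right_nb D Q = mat_form (transpose_mat (rn_S D Q) * fmat Q * rn_S D Q)"

definition cyc :: "int \<Rightarrow> nat \<Rightarrow> form" where
  "cyc D j = (right_nb D ^^ j) (Itilde D)"

fun Lmat :: "int \<Rightarrow> nat \<Rightarrow> int mat" where
  "Lmat D 0 = 1\<^sub>m 2"
| "Lmat D (Suc j) = Lmat D j * rn_S D (cyc D j)"

text \<open>The least positive period (= 2p) of the principal cycle.\<close>
definition cyc_period :: "int \<Rightarrow> nat" where
  "cyc_period D = (LEAST n. 0 < n \<and> (\<forall>i. cyc D (i + n) = cyc D i))"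

definition B0 :: "int \<Rightarrow> int mat" where
  "B0 D = mat_of_rows_list 4 [[1, 0, 0, D - (lam D)^2], [0, 1, 1, 2 * lam D]]"

definition kron :: "int mat \<Rightarrow> int mat \<Rightarrow> int mat" where
  "kron A B = mat (dim_row A * dim_row B) (dim_col A * dim_col B)
     (\<lambda>(i,k). A $$ (i div dim_row B, k div dim_col B) * B $$ (i mod dim_row B, k mod dim_col B))"

definition mnorm :: "int mat \<Rightarrow> int" where
  "mnorm M = Max {\<bar>M $$ (i,k)\<bar> | i k. i < dim_row M \<and> k < dim_col M}"

definition lg :: "real \<Rightarrow> real" where
  "lg x = (if \<bar>x\<bar> \<ge> 4 then log 2 \<bar>x\<bar> else 2)"

definition qf :: "form \<Rightarrow> int \<Rightarrow> int \<Rightarrow> int" where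
  "qf Q x1 x2 = (case Q of (a,b,c) \<Rightarrow> a*x1^2 + 2*b*x1*x2 + c*x2^2)"

definition minor2 :: "int mat \<Rightarrow> nat \<Rightarrow> nat \<Rightarrow> int" where
  "minor2 B i k = B $$ (0,i) * B $$ (1,k) - B $$ (0,k) * B $$ (1,i)"

definition composition_via :: "form \<Rightarrow> form \<Rightarrow> form \<Rightarrow> int mat \<Rightarrow> bool" where
  "composition_via Q1 Q2 Q3 B \<longleftrightarrow>
     B \<in> carrier_mat 2 4 \<and>
     (\<forall>x1 x2 y1 y2 :: int.
        qf Q1 x1 x2 * qf Q2 y1 y2 =
        (let z = vec_of_list [x1*y1, x1*y2, x2*y1, x2*y2]
         in z \<bullet> ((transpose_mat B * fmat Q3 * B) *\<^sub>v z))) \<and>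
     Gcd {minor2 B i k | i k. i < k \<and> k < 4} = 1 \<and>
     lead Q1 * minor2 B 0 1 > 0 \<and> lead Q2 * minor2 B 0 2 > 0"

end

(* Let w = lam + sqrt D.  The forms of the principal cycle are Q^(k) = L_k^t I~ L_k, and
   I~(x1, x2) is the norm of x1 + x2 w in Z[w]; B0 is the multiplication of Z[w] in the basis
   1, w.  Hence Q^(n) o Q^(n) = Q^(m) holds for every m, with bilinear matrix
   adj(L_m) B0 (L_n (x) L_n).  Let alpha_k be the real number given by the first column of L_k.
   Then log |alpha_k| increases strictly, by at most log (2 sqrt D) per step, and the entries of
   the bilinear matrix above are bounded by 64 D^3 as soon as log |alpha_m| is about
   2 log |alpha_n|.  As j <= 2p <= 7D, halving log |alpha_j| some 2 log D times brings it below
   log |alpha_1|; read backwards, this is a chain of O(log D) compositions from I~ to Q^(j). *)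
theory Submission
  imports Defs
begin

definition mat22 :: "int \<Rightarrow> int \<Rightarrow> int \<Rightarrow> int \<Rightarrow> int mat" where
  "mat22 a b c d = mat 2 2 (\<lambda>(i,k). if i = 0 then (if k = 0 then a else b) else (if k = 0 then c else d))"

lemma mat22_carrier [simp]: "mat22 a b c d \<in> carrier_mat 2 2"
  and dim_mat22 [simp]: "dim_row (mat22 a b c d) = 2" "dim_col (mat22 a b c d) = 2"
  by (simp_all add: mat22_def)

lemma index_mat22 [simp]:
  "mat22 a b c d $$ (0,0) = a" "mat22 a b c d $$ (0,1) = b"
  "mat22 a b c d $$ (1,0) = c" "mat22 a b c d $$ (1,1) = d"
  "mat22 a b c d $$ (0,Suc 0) = b" "mat22 a b c d $$ (Suc 0,0) = c" "mat22 a b c d $$ (Suc 0,Suc 0) = d"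
  by (simp_all add: mat22_def)

lemma less_2_cases: "(i::nat) < 2 \<longleftrightarrow> i = 0 \<or> i = 1"
  by auto

lemma sum_lessThan_2: "(\<Sum>i<2. f i) = f 0 + f (1::nat)"
  by (simp add: eval_nat_numeral)

lemma sum_lessThan_4: "(\<Sum>i<4. f i) = f 0 + f 1 + f 2 + f (3::nat)"
  by (simp add: eval_nat_numeral)

lemma index_mult_mat_sum:
  "A \<in> carrier_mat n m \<Longrightarrow> B \<in> carrier_mat m p \<Longrightarrow> i < n \<Longrightarrow> k < p \<Longrightarrow>
   (A * B) $$ (i,k) = (\<Sum>l<m. A $$ (i,l) * B $$ (l,k))"
  by (auto simp: scalar_prod_def atLeast0LessThan intro!: sum.cong)

lemma mat22_eqI:
  "A \<in> carrier_mat 2 2 \<Longrightarrow> A $$ (0,0) = a \<Longrightarrow> A $$ (0,1) = b \<Longrightarrow> A $$ (1,0) = c \<Longrightarrow>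
   A $$ (1,1) = d \<Longrightarrow> A = mat22 a b c d"
  by (rule eq_matI) (auto simp: mat22_def less_2_cases)

lemma mat22_mult:
  "mat22 a b c d * mat22 e f g h = mat22 (a*e + b*g) (a*f + b*h) (c*e + d*g) (c*f + d*h)"
  by (rule mat22_eqI[OF mult_carrier_mat[OF mat22_carrier mat22_carrier]])
     (simp_all del: index_mult_mat add: index_mult_mat_sum[of _ 2 2 _ 2] sum_lessThan_2)

lemma mat22_mult_vec:
  "w \<in> carrier_vec 2 \<Longrightarrow>
   (mat22 a b c d *\<^sub>v w) $ 0 = a * w $ 0 + b * w $ 1 \<and> (mat22 a b c d *\<^sub>v w) $ 1 = c * w $ 0 + d * w $ 1"
  by (auto simp: scalar_prod_def atLeast0LessThan sum_lessThan_2 mat22_def)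

lemma transpose_mat22: "transpose_mat (mat22 a b c d) = mat22 a c b d"
  by (rule mat22_eqI) auto

lemma one_mat22: "1\<^sub>m 2 = mat22 1 0 0 1"
  by (rule mat22_eqI) auto

lemma fmat_eq_mat22: "fmat (a,b,c) = mat22 a b b c"
  by (rule mat22_eqI) (auto simp: fmat_def)

lemma mat_form_mat22: "mat_form (mat22 a b c d) = (a,b,d)"
  by (simp add: mat_form_def)

lemma rn_S_eq_mat22: "rn_S D Q = mat22 0 1 (-1) (rn_mu D Q)"
  by (rule mat22_eqI) (auto simp: rn_S_def mat_of_rows_list_def)

definition adj22 :: "int mat \<Rightarrow> int mat" where
  "adj22 M = mat22 (M $$ (1,1)) (- M $$ (0,1)) (- M $$ (1,0)) (M $$ (0,0))"

definition det22 :: "int mat \<Rightarrow> int" where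
  "det22 M = M $$ (0,0) * M $$ (1,1) - M $$ (0,1) * M $$ (1,0)"

lemma mult_adj22: "det22 (mat22 a b c d) = 1 \<Longrightarrow> mat22 a b c d * adj22 (mat22 a b c d) = 1\<^sub>m 2"
  by (simp add: adj22_def det22_def mat22_mult one_mat22 algebra_simps)

lemma index_mat22_mult:
  assumes "X \<in> carrier_mat 2 n" "j < n"
  shows "(mat22 a b c d * X) $$ (0,j) = a * X $$ (0,j) + b * X $$ (1,j)"
    and "(mat22 a b c d * X) $$ (1,j) = c * X $$ (0,j) + d * X $$ (1,j)"
  using assms by (simp_all del: index_mult_mat add: index_mult_mat_sum[OF mat22_carrier] sum_lessThan_2)

lemma minor2_mult_mat22:
  assumes "X \<in> carrier_mat 2 4" "i < 4" "k < 4"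
  shows "minor2 (mat22 a b c d * X) i k = (a*d - b*c) * minor2 X i k"
  using assms
  by (simp del: index_mult_mat add: minor2_def index_mat22_mult index_mat22_mult[unfolded One_nat_def]
      algebra_simps)

lemma scalar_prod_congruent_form:
  assumes B: "B \<in> carrier_mat 2 n" and z: "z \<in> carrier_vec n"
  shows "z \<bullet> ((transpose_mat B * fmat Q * B) *\<^sub>v z) = qf Q ((B *\<^sub>v z) $ 0) ((B *\<^sub>v z) $ 1)"
proof -
  obtain a b c where Q: "Q = (a,b,c)"
    by (cases Q) auto
  define u where "u = B *\<^sub>v z"
  have u: "u \<in> carrier_vec 2"
    using B z by (simp add: u_def)
  have F: "fmat Q \<in> carrier_mat 2 2"
    by (simp add: Q fmat_eq_mat22)
  have T: "transpose_mat B \<in> carrier_mat n 2"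
    using B by simp
  have w: "fmat Q *\<^sub>v u \<in> carrier_vec 2"
    using F u by simp
  have "(transpose_mat B * fmat Q * B) *\<^sub>v z = (transpose_mat B * fmat Q) *\<^sub>v u"
    unfolding u_def using mult_carrier_mat[OF T F] B z by (rule assoc_mult_mat_vec)
  also have "\<dots> = transpose_mat B *\<^sub>v (fmat Q *\<^sub>v u)"
    using T F u by (rule assoc_mult_mat_vec)
  finally have "z \<bullet> ((transpose_mat B * fmat Q * B) *\<^sub>v z) = (transpose_mat B *\<^sub>v (fmat Q *\<^sub>v u)) \<bullet> z"
    using comm_scalar_prod[OF z mult_mat_vec_carrier[OF T w]] by simp
  also have "\<dots> = (fmat Q *\<^sub>v u) \<bullet> u"
    unfolding u_def by (rule transpose_vec_mult_scalar[OF B z w[unfolded u_def]])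
  also have "\<dots> = qf Q (u $ 0) (u $ 1)"
    using u unfolding Q fmat_eq_mat22
    by (simp add: qf_def scalar_prod_def sum_lessThan_2 atLeast0LessThan mat22_def power2_eq_square
        algebra_simps mult_mat_vec_def)
  finally show ?thesis
    by (simp add: u_def)
qed

lemma mnorm_eq_Max:
  "B \<in> carrier_mat nr nc \<Longrightarrow> mnorm B = Max ((\<lambda>(i,k). \<bar>B $$ (i,k)\<bar>) ` ({..<nr} \<times> {..<nc}))"
  unfolding mnorm_def by (rule arg_cong[of _ _ Max]) auto

lemma mnorm_le:
  assumes "B \<in> carrier_mat nr nc" "0 < nr" "0 < nc" "\<And>i k. i < nr \<Longrightarrow> k < nc \<Longrightarrow> \<bar>B $$ (i,k)\<bar> \<le> M"
  shows "mnorm B \<le> M"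
  unfolding mnorm_eq_Max[OF assms(1)] using assms(2-4) by (subst Max_le_iff) auto

lemma mnorm_nonneg:
  assumes "B \<in> carrier_mat nr nc" "0 < nr" "0 < nc"
  shows "0 \<le> mnorm B"
proof -
  have "\<bar>B $$ (0,0)\<bar> \<le> mnorm B"
    unfolding mnorm_eq_Max[OF assms(1)] using assms(2,3) by (intro Max_ge) force+
  then show ?thesis
    by linarith
qed

section \<open>Arithmetic of \<open>\<int>[\<omega>]\<close>, \<open>\<omega> = \<lambda> + \<surd>D\<close>\<close>

text \<open>The coefficients of \<open>(u\<^sub>1 + u\<^sub>2\<omega>)(v\<^sub>1 + v\<^sub>2\<omega>)\<close> in the basis \<open>1, \<omega>\<close>, using
  \<open>\<omega>\<^sup>2 = 2\<lambda>\<omega> + (D - \<lambda>\<^sup>2)\<close>; the two rows of \<open>B\<^sub>0\<close> are exactly these bilinear maps.\<close>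

definition zmul1 :: "int \<Rightarrow> int \<Rightarrow> int \<Rightarrow> int \<Rightarrow> int \<Rightarrow> int" where
  "zmul1 D u1 u2 v1 v2 = u1*v1 + (D - (lam D)^2)*u2*v2"

definition zmul2 :: "int \<Rightarrow> int \<Rightarrow> int \<Rightarrow> int \<Rightarrow> int \<Rightarrow> int" where
  "zmul2 D u1 u2 v1 v2 = u1*v2 + u2*v1 + 2*lam D*u2*v2"

definition Itilde_polar :: "int \<Rightarrow> int \<Rightarrow> int \<Rightarrow> int \<Rightarrow> int \<Rightarrow> int" where
  "Itilde_polar D u1 u2 v1 v2 = (u1 + lam D * u2) * (v1 + lam D * v2) - D * u2 * v2"

lemma qf_Itilde: "qf (Itilde D) u1 u2 = Itilde_polar D u1 u2 u1 u2"
  by (simp add: qf_def Itilde_def Itilde_polar_def power2_eq_square algebra_simps)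

lemma qf_Itilde_zmul:
  "qf (Itilde D) (zmul1 D u1 u2 v1 v2) (zmul2 D u1 u2 v1 v2) = qf (Itilde D) u1 u2 * qf (Itilde D) v1 v2"
  by (simp add: qf_Itilde Itilde_polar_def zmul1_def zmul2_def power2_eq_square algebra_simps)

lemma qf_Itilde_linear_subst:
  "qf (Itilde D) (p1*x1 + p2*x2) (q1*x1 + q2*x2) =
   Itilde_polar D p1 q1 p1 q1 * x1^2 + 2 * Itilde_polar D p1 q1 p2 q2 * x1 * x2 + Itilde_polar D p2 q2 p2 q2 * x2^2"
  by (simp add: qf_Itilde Itilde_polar_def power2_eq_square algebra_simps)

lemma B0_carrier: "B0 D \<in> carrier_mat 2 4"
  unfolding B0_def mat_of_rows_list_def carrier_mat_def by simp

lemma index_B0: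
  "B0 D $$ (0,0) = 1" "B0 D $$ (0,1) = 0" "B0 D $$ (0,2) = 0" "B0 D $$ (0,3) = D - (lam D)^2"
  "B0 D $$ (1,0) = 0" "B0 D $$ (1,1) = 1" "B0 D $$ (1,2) = 1" "B0 D $$ (1,3) = 2 * lam D"
  "B0 D $$ (0,Suc 0) = 0" "B0 D $$ (Suc 0,0) = 0" "B0 D $$ (Suc 0,Suc 0) = 1" "B0 D $$ (Suc 0,2) = 1"
  "B0 D $$ (Suc 0,3) = 2 * lam D"
  by (simp_all add: B0_def mat_of_rows_list_def)

lemma kron_carrier: "A \<in> carrier_mat 2 2 \<Longrightarrow> B \<in> carrier_mat 2 2 \<Longrightarrow> kron A B \<in> carrier_mat 4 4"
  unfolding kron_def carrier_mat_def by auto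

lemma index_kron:
  "A \<in> carrier_mat 2 2 \<Longrightarrow> B \<in> carrier_mat 2 2 \<Longrightarrow> l < 4 \<Longrightarrow> k < 4 \<Longrightarrow>
   kron A B $$ (l,k) = A $$ (l div 2, k div 2) * B $$ (l mod 2, k mod 2)"
  unfolding kron_def carrier_mat_def by auto

lemma B0_kron_index:
  assumes "A \<in> carrier_mat 2 2" "B \<in> carrier_mat 2 2" "k < 4"
  defines "a \<equiv> k div 2" and "b \<equiv> k mod 2"
  shows "(B0 D * kron A B) $$ (0,k) = zmul1 D (A $$ (0,a)) (A $$ (1,a)) (B $$ (0,b)) (B $$ (1,b))"
    and "(B0 D * kron A B) $$ (1,k) = zmul2 D (A $$ (0,a)) (A $$ (1,a)) (B $$ (0,b)) (B $$ (1,b))"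
proof -
  have row: "(B0 D * kron A B) $$ (i,k) =
      B0 D $$ (i,0) * (A $$ (0,a) * B $$ (0,b)) + B0 D $$ (i,1) * (A $$ (0,a) * B $$ (1,b)) +
      B0 D $$ (i,2) * (A $$ (1,a) * B $$ (0,b)) + B0 D $$ (i,3) * (A $$ (1,a) * B $$ (1,b))"
    if "i < 2" for i
    using assms that
    by (simp del: index_mult_mat add: index_mult_mat_sum[OF B0_carrier kron_carrier] index_kron sum_lessThan_4)
  show "(B0 D * kron A B) $$ (0,k) = zmul1 D (A $$ (0,a)) (A $$ (1,a)) (B $$ (0,b)) (B $$ (1,b))"
    and "(B0 D * kron A B) $$ (1,k) = zmul2 D (A $$ (0,a)) (A $$ (1,a)) (B $$ (0,b)) (B $$ (1,b))"
    using row[of 0] row[of 1] by (simp_all del: index_mult_mat add: index_B0 zmul1_def zmul2_def algebra_simps)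
qed

lemma mult_vec_index_4:
  "M \<in> carrier_mat 2 4 \<Longrightarrow> i < 2 \<Longrightarrow>
   (M *\<^sub>v vec_of_list [z0, z1, z2, z3]) $ i = M $$ (i,0) * z0 + M $$ (i,1) * z1 + M $$ (i,2) * z2 + M $$ (i,3) * z3"
  by (auto simp: scalar_prod_def atLeast0LessThan sum_lessThan_4 eval_nat_numeral vec_of_list_index
      simp del: vec_of_list_Cons)

lemma B0_kron_mult_vec:
  fixes x1 x2 y1 y2 :: int
  assumes A: "A \<in> carrier_mat 2 2" and B: "B \<in> carrier_mat 2 2"
  defines "z \<equiv> vec_of_list [x1*y1, x1*y2, x2*y1, x2*y2]"
    and "u1 \<equiv> A $$ (0,0) * x1 + A $$ (0,1) * x2" and "u2 \<equiv> A $$ (1,0) * x1 + A $$ (1,1) * x2"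
    and "v1 \<equiv> B $$ (0,0) * y1 + B $$ (0,1) * y2" and "v2 \<equiv> B $$ (1,0) * y1 + B $$ (1,1) * y2"
  shows "(B0 D * kron A B *\<^sub>v z) $ 0 = zmul1 D u1 u2 v1 v2"
    and "(B0 D * kron A B *\<^sub>v z) $ 1 = zmul2 D u1 u2 v1 v2"
proof -
  have M: "B0 D * kron A B \<in> carrier_mat 2 4"
    using B0_carrier kron_carrier[OF A B] by (rule mult_carrier_mat)
  show "(B0 D * kron A B *\<^sub>v z) $ 0 = zmul1 D u1 u2 v1 v2"
    and "(B0 D * kron A B *\<^sub>v z) $ 1 = zmul2 D u1 u2 v1 v2"
    unfolding z_def
    by (simp_all del: index_mult_mat vec_of_list_Cons
        add: mult_vec_index_4[OF M] B0_kron_index[OF A B] B0_kron_index[OF A B, unfolded One_nat_def]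
        u1_def u2_def v1_def v2_def zmul1_def zmul2_def algebra_simps)
qed

lemma minors_B0_kron:
  fixes p1 p2 q1 q2 :: int
  defines "L \<equiv> mat22 p1 p2 q1 q2" and "\<delta> \<equiv> p1 * q2 - p2 * q1"
  shows "minor2 (B0 D * kron L L) 0 1 = Itilde_polar D p1 q1 p1 q1 * \<delta>"
    and "minor2 (B0 D * kron L L) 0 2 = Itilde_polar D p1 q1 p1 q1 * \<delta>"
    and "minor2 (B0 D * kron L L) 0 3 = 2 * Itilde_polar D p1 q1 p2 q2 * \<delta>"
    and "minor2 (B0 D * kron L L) 1 3 = Itilde_polar D p2 q2 p2 q2 * \<delta>"
proof -
  have L: "L \<in> carrier_mat 2 2"
    by (simp add: L_def)
  show "minor2 (B0 D * kron L L) 0 1 = Itilde_polar D p1 q1 p1 q1 * \<delta>"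
    and "minor2 (B0 D * kron L L) 0 2 = Itilde_polar D p1 q1 p1 q1 * \<delta>"
    and "minor2 (B0 D * kron L L) 0 3 = 2 * Itilde_polar D p1 q1 p2 q2 * \<delta>"
    and "minor2 (B0 D * kron L L) 1 3 = Itilde_polar D p2 q2 p2 q2 * \<delta>"
    unfolding minor2_def
    using index_mat22[of p1 p2 q1 q2, folded L_def]
    by (simp_all del: index_mult_mat add: B0_kron_index[OF L L] B0_kron_index[OF L L, unfolded One_nat_def]
        \<delta>_def zmul1_def zmul2_def Itilde_polar_def power2_eq_square algebra_simps)
qed

lemma sqrt_nonsquare_not_int:
  assumes "0 \<le> D" "\<not> (\<exists>n::int. D = n^2)"
  shows "sqrt (real_of_int D) \<noteq> real_of_int k"
proof
  assume "sqrt (real_of_int D) = real_of_int k"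
  then have "real_of_int D = (real_of_int k)^2"
    using assms(1) by (metis of_int_0_le_iff real_sqrt_pow2)
  then have "D = k^2"
    by (metis of_int_eq_iff of_int_power)
  with assms(2) show False
    by blast
qed

lemma dvd_diff_in_open_interval_eq:
  fixes x y c :: int and lo :: real
  assumes "c \<noteq> 0" "c dvd (x - y)" "lo < x" "x < lo + \<bar>c\<bar>" "lo < y" "y < lo + \<bar>c\<bar>"
  shows "x = y"
proof -
  obtain k where k: "x - y = c * k"
    using assms(2) by blast
  have "\<bar>real_of_int (x - y)\<bar> < \<bar>real_of_int c\<bar>"
    using assms(3-6) by (simp add: abs_less_iff)
  then have "real_of_int (\<bar>c\<bar> * \<bar>k\<bar>) < real_of_int (\<bar>c\<bar> * 1)"
    using k by (simp add: abs_mult del: of_int_diff)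
  then have "\<bar>c\<bar> * \<bar>k\<bar> < \<bar>c\<bar> * 1"
    by (simp only: of_int_less_iff)
  then have "\<bar>k\<bar> < 1"
    using assms(1) by (simp add: mult_less_cancel_left_pos)
  then show ?thesis
    using k by simp
qed

lemma ex_multiple_in_open_interval:
  assumes c: "c \<noteq> 0" and y: "\<forall>k::int. y \<noteq> real_of_int k"
  shows "\<exists>\<mu>::int. y < real_of_int (\<mu>*c) \<and> real_of_int (\<mu>*c) < y + \<bar>real_of_int c\<bar>"
proof -
  define \<nu> where "\<nu> = \<lfloor>y / \<bar>c\<bar>\<rfloor> + 1"
  have pos: "real_of_int \<bar>c\<bar> > 0"
    using c by simp
  have "real_of_int \<lfloor>y / \<bar>c\<bar>\<rfloor> \<noteq> y / \<bar>c\<bar>"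
  proof
    assume h: "real_of_int \<lfloor>y / \<bar>c\<bar>\<rfloor> = y / \<bar>c\<bar>"
    have "y = (y / \<bar>c\<bar>) * \<bar>c\<bar>"
      using pos by simp
    also have "\<dots> = real_of_int \<lfloor>y / \<bar>c\<bar>\<rfloor> * \<bar>c\<bar>"
      by (simp only: h)
    finally have "y = real_of_int (\<lfloor>y / \<bar>c\<bar>\<rfloor> * \<bar>c\<bar>)"
      by (simp only: of_int_mult of_int_abs)
    with y show False
      by blast
  qed
  then have "real_of_int \<lfloor>y / \<bar>c\<bar>\<rfloor> < y / \<bar>c\<bar>"
    by (meson less_eq_real_def of_int_floor_le)
  moreover have "y / \<bar>c\<bar> < real_of_int \<lfloor>y / \<bar>c\<bar>\<rfloor> + 1"
    by linarith
  ultimately have bounds: "y < real_of_int \<nu> * \<bar>c\<bar>" "real_of_int \<nu> * \<bar>c\<bar> < y + \<bar>c\<bar>"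
    using pos unfolding \<nu>_def by (simp_all add: field_simps)
  have eq: "sgn c * \<nu> * c = \<nu> * \<bar>c\<bar>"
    using c by (auto simp: sgn_if)
  have "y < real_of_int (sgn c * \<nu> * c)" "real_of_int (sgn c * \<nu> * c) < y + \<bar>real_of_int c\<bar>"
    unfolding eq using bounds by simp_all
  then show ?thesis
    by blast
qed

lemma ex1_multiple_in_open_interval:
  assumes c: "c \<noteq> 0" and y: "\<forall>k::int. y \<noteq> real_of_int k"
  shows "\<exists>!\<mu>::int. y < real_of_int (\<mu>*c) \<and> real_of_int (\<mu>*c) < y + \<bar>real_of_int c\<bar>"
proof (rule ex_ex1I)
  show "\<exists>\<mu>::int. y < real_of_int (\<mu>*c) \<and> real_of_int (\<mu>*c) < y + \<bar>real_of_int c\<bar>"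
    using ex_multiple_in_open_interval[OF assms] .
next
  fix \<mu>1 \<mu>2 :: int
  assume "y < real_of_int (\<mu>1*c) \<and> real_of_int (\<mu>1*c) < y + \<bar>real_of_int c\<bar>"
    and "y < real_of_int (\<mu>2*c) \<and> real_of_int (\<mu>2*c) < y + \<bar>real_of_int c\<bar>"
  moreover have "c dvd \<mu>1 * c - \<mu>2 * c"
    by (metis dvd_triv_right left_diff_distrib)
  ultimately have "\<mu>1 * c = \<mu>2 * c"
    using c dvd_diff_in_open_interval_eq[of c "\<mu>1 * c" "\<mu>2 * c" y] by simp
  then show "\<mu>1 = \<mu>2"
    using c by simp
qed

lemma funpow_inj_on_cancel:
  assumes "inj_on f A" "f ` A \<subseteq> A" "(f ^^ i) y = (f ^^ i) z" "y \<in> A" "z \<in> A"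
  shows "y = z"
  using assms(3-5)
proof (induction i arbitrary: y z)
  case (Suc i)
  have "(f ^^ i) (f y) = (f ^^ i) (f z)"
    using Suc.prems(1) by (simp only: funpow_Suc_right comp_def)
  then have "f y = f z"
    using Suc.IH assms(2) Suc.prems(2,3) by blast
  then show ?case
    using assms(1) Suc.prems(2,3) by (auto dest: inj_onD)
qed simp

lemma funpow_return_le_card:
  assumes fin: "finite A" and maps: "f ` A \<subseteq> A" and inj: "inj_on f A" and x: "x \<in> A"
  obtains n where "0 < n" "n \<le> card A" "(f ^^ n) x = x"
proof -
  have orbit: "(f ^^ k) x \<in> A" for k
    by (induction k) (use maps x in auto)
  have "\<not> inj_on (\<lambda>k. (f ^^ k) x) {0..card A}"
  proof
    assume "inj_on (\<lambda>k. (f ^^ k) x) {0..card A}"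
    then have "card {0..card A} \<le> card A"
      using orbit fin by (intro card_inj_on_le) auto
    then show False
      by simp
  qed
  then obtain i i' where ii': "i < i'" "i' \<le> card A" "(f ^^ i) x = (f ^^ i') x"
  proof -
    assume that: "\<And>i i'. i < i' \<Longrightarrow> i' \<le> card A \<Longrightarrow> (f ^^ i) x = (f ^^ i') x \<Longrightarrow> thesis"
    from \<open>\<not> inj_on _ _\<close> obtain a b where "a \<le> card A" "b \<le> card A" "a \<noteq> b" "(f ^^ a) x = (f ^^ b) x"
      unfolding inj_on_def by auto
    then show thesis
      using that[of a b] that[of b a] by (cases "a < b") auto
  qed
  have "(f ^^ i) ((f ^^ (i' - i)) x) = (f ^^ (i + (i' - i))) x"
    by (simp add: funpow_add)
  also have "\<dots> = (f ^^ i) x"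
    using ii' by simp
  finally have "(f ^^ (i' - i)) x = x"
    using funpow_inj_on_cancel[OF inj maps] orbit x by blast
  then show thesis
    using that[of "i' - i"] ii' by simp
qed

lemma Gcd_eq_1_if_combination:
  fixes S :: "int set"
  assumes "x \<in> S" "y \<in> S" "w \<in> S" "r*x + s*y + t*w = 1"
  shows "Gcd S = 1"
proof -
  have "Gcd S dvd r*x + s*y + t*w"
    using assms(1-3) by (intro dvd_add dvd_mult Gcd_dvd)
  then show ?thesis
    using assms(4) Gcd_int_greater_eq_0[of S] zdvd1_eq by auto
qed

lemma log2_4: "log 2 (4::real) = 2"
  using log_powr_cancel[of 2 2] by simp

lemma lg_ge_2: "lg x \<ge> 2"
proof (cases "\<bar>x\<bar> \<ge> 4")
  case True
  then have "log 2 4 \<le> log 2 \<bar>x\<bar>"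
    by (subst log_le_cancel_iff) auto
  with True show ?thesis
    by (simp add: lg_def log2_4)
qed (simp add: lg_def)

lemma log_le_lg: "\<bar>x\<bar> \<ge> 1 \<Longrightarrow> log 2 \<bar>x\<bar> \<le> lg x"
proof (cases "\<bar>x\<bar> \<ge> 4")
  case False
  assume "\<bar>x\<bar> \<ge> 1"
  with False have "log 2 \<bar>x\<bar> \<le> log 2 4"
    by (subst log_le_cancel_iff) auto
  with False show ?thesis
    by (simp add: lg_def log2_4)
qed (simp add: lg_def)

lemma lg_le_log: "\<bar>x\<bar> \<le> y \<Longrightarrow> y \<ge> 4 \<Longrightarrow> lg x \<le> log 2 y"
proof (cases "\<bar>x\<bar> \<ge> 4")
  case False
  assume "y \<ge> 4"
  then have "log 2 4 \<le> log 2 y"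
    by (subst log_le_cancel_iff) auto
  with False show ?thesis
    by (simp add: lg_def log2_4)
qed (simp add: lg_def)

text \<open>The estimate behind the entry bound for the composition matrix, with \<open>r = 2\<surd>D\<close>,
  \<open>F = \<bar>\<alpha>\<^sub>n\<bar>\<close>, \<open>G = \<bar>\<alpha>\<^sub>m\<bar>\<close>; the hypotheses \<open>H\<close> say that \<open>m\<close> doubles \<open>n\<close>.\<close>

lemma abs_products_le:
  fixes r F F' G G' x x' y y' u u' :: real
  assumes r: "r \<ge> 1" and pos: "F > 0" "G > 0"
    and x: "\<bar>x\<bar> \<le> F'" "\<bar>x'\<bar> \<le> r / F" and y: "\<bar>y\<bar> \<le> F'" "\<bar>y'\<bar> \<le> r / F"
    and u: "\<bar>u\<bar> \<le> G'" "\<bar>u'\<bar> \<le> r / G"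
    and H: "F'^2 \<le> r^3 * G" "G' \<le> r^3 * F^2"
  shows "\<bar>x * y * u'\<bar> + \<bar>x' * y' * u\<bar> \<le> r^4 + r^5"
proof -
  have "\<bar>x * y * u'\<bar> \<le> F' * F' * (r / G)"
    unfolding abs_mult using x y u by (intro mult_mono) auto
  also have "\<dots> = F'^2 * r / G"
    by (simp add: power2_eq_square)
  also have "\<dots> \<le> r^3 * G * r / G"
    using H(1) pos r by (intro divide_right_mono mult_right_mono) auto
  also have "\<dots> = r^4"
    using pos by (simp add: power_numeral_reduce)
  finally have 1: "\<bar>x * y * u'\<bar> \<le> r^4" .
  have "\<bar>x' * y' * u\<bar> \<le> (r / F) * (r / F) * G'"
    unfolding abs_mult using x y u pos r by (intro mult_mono) auto
  also have "\<dots> = r^2 * G' / F^2"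
    by (simp add: power2_eq_square)
  also have "\<dots> \<le> r^2 * (r^3 * F^2) / F^2"
    using H(2) pos r by (intro divide_right_mono mult_left_mono) auto
  also have "\<dots> = r^5"
    using pos by (simp add: power_numeral_reduce)
  finally have 2: "\<bar>x' * y' * u\<bar> \<le> r^5" .
  show ?thesis
    using 1 2 by simp
qed

definition last_below :: "(nat \<Rightarrow> real) \<Rightarrow> nat \<Rightarrow> real \<Rightarrow> nat" where
  "last_below f j y = (GREATEST m. m \<le> j \<and> f m \<le> y)"

lemma last_below:
  assumes inc: "\<And>k. f k < f (Suc k)" and y: "f 0 \<le> y" "y \<le> f j"
  shows "last_below f j y \<le> j" "f (last_below f j y) \<le> y" "y < f (Suc (last_below f j y))"
proof -
  have sel: "last_below f j y \<le> j \<and> f (last_below f j y) \<le> y"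
    unfolding last_below_def by (rule GreatestI_nat[of _ 0 j]) (use y in auto)
  then show "last_below f j y \<le> j" "f (last_below f j y) \<le> y"
    by auto
  show "y < f (Suc (last_below f j y))"
  proof (cases "Suc (last_below f j y) \<le> j")
    case True
    have "\<not> f (Suc (last_below f j y)) \<le> y"
    proof
      assume "f (Suc (last_below f j y)) \<le> y"
      with True have "Suc (last_below f j y) \<le> last_below f j y"
        unfolding last_below_def[of f j y] by (intro Greatest_le_nat[of _ _ j]) auto
      then show False
        by simp
    qed
    then show ?thesis
      by simp
  next
    case False
    then have "last_below f j y = j"
      using sel by simp
    then show ?thesis
      using inc[of j] y by simp
  qed
qed

lemma last_below_self:
  assumes "\<And>k. f k < f (Suc k)"
  shows "last_below f j (f j) = j"
proof -
  have "j \<le> last_below f j (f j)"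
    unfolding last_below_def by (rule Greatest_le_nat[of _ _ j]) auto
  moreover have "f 0 \<le> f j"
    using assms by (metis lift_Suc_mono_le less_imp_le le0)
  ultimately show ?thesis
    using last_below(1)[of f "f j" j, OF assms] by simp
qed

lemma last_below_eq_0:
  assumes inc: "\<And>k. f k < f (Suc k)" and y: "f 0 \<le> y" "y < f 1"
  shows "last_below f j y = 0"
  unfolding last_below_def
proof (rule Greatest_equality)
  fix m assume "m \<le> j \<and> f m \<le> y"
  then have "\<not> f 1 \<le> f m"
    using y by simp
  then show "m \<le> 0"
    using lift_Suc_mono_le[of f, OF less_imp_le[OF inc], of 1 m] by linarith
qed (use y in simp)

lemma last_below_double:
  assumes inc: "\<And>k. f k < f (Suc k)" and step: "\<And>k. f (Suc k) \<le> f k + c"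
    and f0: "f 0 = 0" and y: "0 \<le> y" "2 * y \<le> f j"
  defines "n \<equiv> last_below f j y" and "m \<equiv> last_below f j (2 * y)"
  shows "2 * f (Suc n) \<le> f m + 3 * c" "f (Suc m) \<le> 2 * f n + 3 * c"
proof -
  have "f n \<le> y" "y < f (Suc n)"
    using last_below(2,3)[of f y j, OF inc] f0 y unfolding n_def by auto
  moreover have "f m \<le> 2 * y" "2 * y < f (Suc m)"
    using last_below(2,3)[of f "2 * y" j, OF inc] f0 y unfolding m_def by auto
  ultimately show "2 * f (Suc n) \<le> f m + 3 * c" "f (Suc m) \<le> 2 * f n + 3 * c"
    using step[of n] step[of m] by linarith+
qed

lemma exponent_bound_lg:
  fixes x :: real
  assumes "1 \<le> x"
  obtains N :: nat where "64 * x^2 \<le> 2^N" "real N \<le> 6 * (lg x)^2"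
proof
  define e where "e = nat \<lceil>log 2 x\<rceil>"
  have log0: "0 \<le> log 2 x"
    using assms by simp
  have "x = 2 powr (log 2 x)"
    using assms by simp
  also have "\<dots> \<le> 2 powr (real e)"
    unfolding e_def using log0 by (intro powr_mono) auto
  finally have "x \<le> 2^e"
    by (simp add: powr_realpow)
  then have "x^2 \<le> (2^e)^2"
    using assms by (intro power_mono) auto
  then show "64 * x^2 \<le> 2 ^ (2 * e + 6)"
    by (simp add: power_add power_mult mult.commute)
  have lg: "2 \<le> lg x" "log 2 x \<le> lg x"
    using lg_ge_2 log_le_lg[of x] assms by auto
  have "real (2 * e + 6) \<le> 2 * log 2 x + 8"
    unfolding e_def using log0 by linarith
  also have "\<dots> \<le> 6 * lg x"
    using lg by linarith
  also have "\<dots> \<le> 6 * (lg x)^2"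
    using lg mult_left_mono[of 1 "lg x" "lg x"] by (simp add: power2_eq_square)
  finally show "real (2 * e + 6) \<le> 6 * (lg x)^2" .
qed

section \<open>Reduced forms and the period of the principal cycle\<close>

lemma right_nb_eq:
  "right_nb D (a,b,c) =
   (c, -b - rn_mu D (a,b,c) * c, a + 2*b*rn_mu D (a,b,c) + c * (rn_mu D (a,b,c))^2)"
  unfolding right_nb_def rn_S_eq_mat22 fmat_eq_mat22 transpose_mat22 mat22_mult mat_form_mat22
  by (simp add: algebra_simps power2_eq_square)

lemma fmat_right_nb: "fmat (right_nb D Q) = transpose_mat (rn_S D Q) * fmat Q * rn_S D Q"
proof -
  obtain a b c where Q: "Q = (a,b,c)"
    by (cases Q) auto
  show ?thesis
    unfolding Q right_nb_eq fmat_eq_mat22 rn_S_eq_mat22 transpose_mat22 mat22_mult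
    by (simp add: algebra_simps power2_eq_square)
qed

locale nonsquare_det =
  fixes D :: int
  assumes D_pos: "0 < D" and nonsquare: "\<not> (\<exists>n::int. D = n^2)"
begin

definition rtD :: real where "rtD = sqrt (real_of_int D)"

lemma rtD_pos: "rtD > 0"
  and rtD_ge_1: "rtD \<ge> 1"
  and rtD_square: "rtD * rtD = real_of_int D"
  and rtD_not_int: "rtD \<noteq> real_of_int k"
  using D_pos sqrt_nonsquare_not_int[OF _ nonsquare] by (simp_all add: rtD_def)

lemma rtD_power2: "rtD^2 = real_of_int D"
  using rtD_square by (simp add: power2_eq_square)

lemma rtD_le_D: "rtD \<le> real_of_int D"
  using mult_left_mono[OF rtD_ge_1, of rtD] rtD_pos rtD_square by simp

lemma reduced_iff:
  "reduced D (a,b,c) \<longleftrightarrow> b^2 - a*c = D \<and> 0 < b \<and> real_of_int b < rtD \<and>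
     rtD - b < \<bar>real_of_int a\<bar> \<and> \<bar>real_of_int a\<bar> < rtD + b"
  by (simp add: reduced_def fdet_def rtD_def)

lemma rn_mu_bounds:
  assumes "c \<noteq> 0"
  shows "- rtD - b < real_of_int (rn_mu D (a,b,c) * c)"
    and "real_of_int (rn_mu D (a,b,c) * c) < - rtD - b + \<bar>real_of_int c\<bar>"
proof -
  have "\<forall>k::int. - rtD - real_of_int b \<noteq> real_of_int k"
  proof
    fix k :: int
    show "- rtD - real_of_int b \<noteq> real_of_int k"
      using rtD_not_int[of "- k - b"] by auto
  qed
  from theI'[OF ex1_multiple_in_open_interval[OF assms this]]
  show "- rtD - b < real_of_int (rn_mu D (a,b,c) * c)"
    and "real_of_int (rn_mu D (a,b,c) * c) < - rtD - b + \<bar>real_of_int c\<bar>"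
    unfolding rn_mu_def prod.case rtD_def by simp_all
qed

text \<open>Since \<open>\<bar>a\<bar> \<bar>c\<bar> = D - b\<^sup>2 = (\<surd>D - b)(\<surd>D + b)\<close>, the bounds on \<open>\<bar>a\<bar>\<close>
  transfer to \<open>\<bar>c\<bar>\<close>.\<close>

lemma reduced_abs_c_bounds:
  assumes "reduced D (a,b,c)"
  shows "rtD - b < \<bar>real_of_int c\<bar>" "\<bar>real_of_int c\<bar> < rtD + b" "a \<noteq> 0" "c \<noteq> 0"
proof -
  from assms have det: "b^2 - a*c = D" and b: "0 < b" "real_of_int b < rtD"
    and a: "rtD - b < \<bar>real_of_int a\<bar>" "\<bar>real_of_int a\<bar> < rtD + b"
    by (auto simp: reduced_iff)
  have pos: "rtD - b > 0" "rtD + b > 0"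
    using b by auto
  have "real_of_int a * real_of_int c = - ((rtD - b) * (rtD + b))"
    using arg_cong[OF det, of real_of_int] rtD_square by (simp add: algebra_simps power2_eq_square)
  then have prod: "\<bar>real_of_int a\<bar> * \<bar>real_of_int c\<bar> = (rtD - b) * (rtD + b)"
    using pos by (metis abs_minus_cancel abs_mult abs_of_pos mult_pos_pos)
  show "a \<noteq> 0" "c \<noteq> 0"
    using prod pos by auto
  show "rtD - b < \<bar>real_of_int c\<bar>"
  proof (rule ccontr)
    assume "\<not> ?thesis"
    then have "\<bar>real_of_int a\<bar> * \<bar>real_of_int c\<bar> \<le> \<bar>real_of_int a\<bar> * (rtD - b)"
      by (simp add: mult_left_mono)
    also have "\<dots> < (rtD + b) * (rtD - b)"
      using a pos by (simp add: mult_strict_right_mono)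
    finally show False
      using prod by (simp add: algebra_simps)
  qed
  show "\<bar>real_of_int c\<bar> < rtD + b"
  proof (rule ccontr)
    assume "\<not> ?thesis"
    then have "\<bar>real_of_int a\<bar> * (rtD + b) \<le> \<bar>real_of_int a\<bar> * \<bar>real_of_int c\<bar>"
      by (simp add: mult_left_mono)
    moreover have "(rtD - b) * (rtD + b) < \<bar>real_of_int a\<bar> * (rtD + b)"
      using a pos by (simp add: mult_strict_right_mono)
    ultimately show False
      using prod by simp
  qed
qed

lemma reduced_right_nb:
  assumes "reduced D Q"
  shows "reduced D (right_nb D Q)"
proof -
  obtain a b c where Q: "Q = (a,b,c)"
    by (cases Q) auto
  note red = assms[unfolded Q]
  from red have det: "b^2 - a*c = D" and b: "0 < b" "real_of_int b < rtD"
    by (auto simp: reduced_iff)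
  note c = reduced_abs_c_bounds[OF red]
  define \<mu> where "\<mu> = rn_mu D (a,b,c)"
  define b' where "b' = -b - \<mu>*c"
  have b': "rtD - \<bar>real_of_int c\<bar> < b'" "b' < rtD"
    using rn_mu_bounds[OF c(4), where a=a and b=b] by (auto simp: b'_def \<mu>_def)
  have det': "b'^2 - c*(a + 2*b*\<mu> + c*\<mu>^2) = D"
    using det by (simp add: b'_def algebra_simps power2_eq_square)
  have "0 < b' \<and> \<bar>real_of_int c\<bar> < rtD + b'"
  proof (cases "\<bar>real_of_int c\<bar> \<le> rtD")
    case True
    then show ?thesis
      using b' rtD_pos by linarith
  next
    case False
    \<comment> \<open>then \<open>\<bar>c\<bar> - b\<close> lies in the window defining \<open>\<mu>\<close>, in the residue class of \<open>b'\<close>\<close>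
    have "b' = \<bar>c\<bar> - b"
    proof (rule dvd_diff_in_open_interval_eq[OF c(4), of _ _ "rtD - \<bar>real_of_int c\<bar>"])
      show "c dvd b' - (\<bar>c\<bar> - b)"
        by (simp add: b'_def abs_if)
    qed (use b b' c False in auto)
    then show ?thesis
      using False b by auto
  qed
  then show ?thesis
    unfolding Q right_nb_eq \<mu>_def[symmetric] b'_def[symmetric] reduced_iff
    using det' b' by auto
qed

lemma inj_on_right_nb: "inj_on (right_nb D) {Q. reduced D Q}"
proof (rule inj_onI)
  fix Q Q' assume "Q \<in> {Q. reduced D Q}" "Q' \<in> {Q. reduced D Q}" and eq: "right_nb D Q = right_nb D Q'"
  then have red: "reduced D Q" "reduced D Q'"
    by simp_all
  obtain a b c where Q: "Q = (a,b,c)"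
    by (cases Q) auto
  obtain a' b' c' where Q': "Q' = (a',b',c')"
    by (cases Q') auto
  note r = red(1)[unfolded Q] and r' = red(2)[unfolded Q']
  have c: "c' = c" and b: "b - b' = (rn_mu D (a',b',c') - rn_mu D (a,b,c)) * c"
    using eq unfolding Q Q' right_nb_eq by (auto simp: algebra_simps)
  have "b = b'"
    using reduced_abs_c_bounds(1,4)[OF r] reduced_abs_c_bounds(1)[OF r'] r r' c b
    by (intro dvd_diff_in_open_interval_eq[OF reduced_abs_c_bounds(4)[OF r], of _ _ "rtD - \<bar>real_of_int c\<bar>"])
       (auto simp: reduced_iff)
  moreover have "a * c = a' * c"
    using r r' c \<open>b = b'\<close> by (auto simp: reduced_iff)
  ultimately show "Q = Q'"
    using Q Q' c reduced_abs_c_bounds(4)[OF r] by simp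
qed

lemma lam_bounds: "1 \<le> lam D" "real_of_int (lam D) < rtD" "rtD < lam D + 1"
  using rtD_ge_1 rtD_not_int[of "lam D"] unfolding lam_def rtD_def[symmetric]
  by (simp_all add: le_floor_iff) linarith+

lemma lam_square_le: "(lam D)^2 \<le> D"
proof -
  have "real_of_int (lam D) ^2 \<le> rtD^2"
    using lam_bounds by (intro power_mono) auto
  then show ?thesis
    using rtD_power2 by (metis of_int_le_iff of_int_power)
qed

lemma reduced_Itilde: "reduced D (Itilde D)"
  using lam_bounds rtD_pos unfolding Itilde_def reduced_iff by (auto simp: algebra_simps)

lemma reduced_cyc: "reduced D (cyc D k)"
  by (induction k) (auto simp: cyc_def reduced_Itilde reduced_right_nb)

lemma cyc_Suc: "cyc D (Suc k) = right_nb D (cyc D k)"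
  by (simp add: cyc_def)

lemma reduced_subset:
  "{Q. reduced D Q} \<subseteq>
   (\<lambda>(a,b). (a, b, (b^2 - D) div a)) ` ({-(2 * lam D + 1)..2 * lam D + 1} \<times> {1..lam D})"
proof clarify
  fix a b c assume red: "reduced D (a,b,c)"
  then have det: "b^2 - a*c = D" and b: "0 < b" "real_of_int b < rtD"
    and "\<bar>real_of_int a\<bar> < rtD + b"
    by (auto simp: reduced_iff)
  then have "\<bar>real_of_int a\<bar> < real_of_int (2 * lam D + 2)"
    using lam_bounds by simp
  then have "\<bar>a\<bar> < 2 * lam D + 2"
    by linarith
  moreover have "b \<le> lam D"
    using b unfolding lam_def rtD_def by (simp add: le_floor_iff)
  moreover have "c = (b^2 - D) div a"
    using det reduced_abs_c_bounds(3)[OF red] by auto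
  ultimately show "(a,b,c) \<in> (\<lambda>(a,b). (a, b, (b^2 - D) div a)) `
      ({-(2 * lam D + 1)..2 * lam D + 1} \<times> {1..lam D})"
    using b by (intro image_eqI[of _ _ "(a,b)"]) auto
qed

lemma finite_reduced: "finite {Q. reduced D Q}"
  by (rule finite_subset[OF reduced_subset]) simp

lemma card_reduced_le: "card {Q. reduced D Q} \<le> 7 * nat D"
proof -
  have "card {Q. reduced D Q} \<le>
        card ((\<lambda>(a,b). (a, b, (b^2 - D) div a)) ` ({-(2 * lam D + 1)..2 * lam D + 1} \<times> {1..lam D}))"
    by (rule card_mono[OF _ reduced_subset]) simp
  also have "\<dots> \<le> card ({-(2 * lam D + 1)..2 * lam D + 1} \<times> {1..lam D})"
    by (rule card_image_le) simp
  also have "\<dots> = nat ((4 * lam D + 3) * lam D)"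
    using lam_bounds(1) by (simp add: card_cartesian_product nat_mult_distrib)
  also have "\<dots> \<le> nat (7 * D)"
  proof -
    have "lam D * 1 \<le> lam D * lam D"
      using lam_bounds(1) by (intro mult_left_mono) auto
    then show ?thesis
      using lam_square_le by (intro nat_mono) (simp add: power2_eq_square algebra_simps)
  qed
  finally show ?thesis
    by (simp add: nat_mult_distrib)
qed

lemma cyc_period_le: "cyc_period D \<le> 7 * nat D"
proof -
  obtain n where n: "0 < n" "n \<le> card {Q. reduced D Q}" "(right_nb D ^^ n) (Itilde D) = Itilde D"
    using funpow_return_le_card[OF finite_reduced _ inj_on_right_nb] reduced_right_nb reduced_Itilde
    by blast
  have "\<forall>i. cyc D (i + n) = cyc D i"
    using n(3) by (simp add: cyc_def funpow_add)
  then have "cyc_period D \<le> n"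
    unfolding cyc_period_def using n(1) by (intro Least_le) simp
  then show ?thesis
    using n(2) card_reduced_le by simp
qed

section \<open>The principal cycle inside \<open>\<int>[\<omega>]\<close>\<close>

definition p1 :: "nat \<Rightarrow> int" where "p1 k = Lmat D k $$ (0,0)"

definition p2 :: "nat \<Rightarrow> int" where "p2 k = Lmat D k $$ (0,1)"

definition q1 :: "nat \<Rightarrow> int" where "q1 k = Lmat D k $$ (1,0)"

definition q2 :: "nat \<Rightarrow> int" where "q2 k = Lmat D k $$ (1,1)"

lemma Lmat_carrier: "Lmat D k \<in> carrier_mat 2 2"
  by (induction k) (simp_all add: rn_S_eq_mat22)

lemma Lmat_eq_mat22: "Lmat D k = mat22 (p1 k) (p2 k) (q1 k) (q2 k)"
  using Lmat_carrier by (intro mat22_eqI) (auto simp: p1_def p2_def q1_def q2_def)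

lemma Lmat_Suc_entries:
  "p1 (Suc k) = - p2 k" "p2 (Suc k) = p1 k + rn_mu D (cyc D k) * p2 k"
  "q1 (Suc k) = - q2 k" "q2 (Suc k) = q1 k + rn_mu D (cyc D k) * q2 k"
proof -
  have "Lmat D (Suc k) = mat22 (- p2 k) (p1 k + rn_mu D (cyc D k) * p2 k) (- q2 k) (q1 k + rn_mu D (cyc D k) * q2 k)"
    by (simp add: Lmat_eq_mat22[of k] rn_S_eq_mat22 mat22_mult algebra_simps)
  then show "p1 (Suc k) = - p2 k" "p2 (Suc k) = p1 k + rn_mu D (cyc D k) * p2 k"
    "q1 (Suc k) = - q2 k" "q2 (Suc k) = q1 k + rn_mu D (cyc D k) * q2 k"
    unfolding p1_def p2_def q1_def q2_def by simp_all
qed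

lemma det_Lmat: "p1 k * q2 k - p2 k * q1 k = 1"
proof (induction k)
  case 0
  then show ?case
    by (simp add: p1_def p2_def q1_def q2_def one_mat22)
next
  case (Suc k)
  then show ?case
    by (simp add: Lmat_Suc_entries algebra_simps)
qed

lemma fmat_cyc: "fmat (cyc D k) = transpose_mat (Lmat D k) * fmat (Itilde D) * Lmat D k"
proof (induction k)
  case 0
  have "fmat (Itilde D) \<in> carrier_mat 2 2"
    by (simp add: Itilde_def fmat_eq_mat22)
  then show ?case
    by (simp add: cyc_def)
next
  case (Suc k)
  define S where "S = rn_S D (cyc D k)"
  have "fmat (cyc D (Suc k)) = transpose_mat S * (transpose_mat (Lmat D k) * fmat (Itilde D) * Lmat D k) * S"
    unfolding cyc_Suc fmat_right_nb Suc.IH S_def ..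
  also have "\<dots> = transpose_mat (Lmat D k * S) * fmat (Itilde D) * (Lmat D k * S)"
    by (simp add: S_def rn_S_eq_mat22 Lmat_eq_mat22 Itilde_def fmat_eq_mat22 transpose_mat22 mat22_mult
        algebra_simps)
  finally show ?case
    by (simp add: S_def)
qed

lemma cyc_eq:
  "cyc D k = (Itilde_polar D (p1 k) (q1 k) (p1 k) (q1 k), Itilde_polar D (p1 k) (q1 k) (p2 k) (q2 k),
              Itilde_polar D (p2 k) (q2 k) (p2 k) (q2 k))"
proof -
  have "cyc D k = mat_form (fmat (cyc D k))"
    by (cases "cyc D k") (simp add: fmat_eq_mat22 mat_form_mat22)
  then show ?thesis
    unfolding fmat_cyc Lmat_eq_mat22 Itilde_def fmat_eq_mat22 transpose_mat22 mat22_mult mat_form_mat22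
    by (simp add: Itilde_polar_def power2_eq_square algebra_simps)
qed

lemma qf_cyc: "qf (cyc D k) x1 x2 = qf (Itilde D) (p1 k * x1 + p2 k * x2) (q1 k * x1 + q2 k * x2)"
  unfolding qf_Itilde_linear_subst by (subst cyc_eq) (simp add: qf_def)

definition emb :: "int \<Rightarrow> int \<Rightarrow> real" where
  "emb u1 u2 = real_of_int u1 + (real_of_int (lam D) + rtD) * real_of_int u2"

definition emb' :: "int \<Rightarrow> int \<Rightarrow> real" where
  "emb' u1 u2 = real_of_int u1 + (real_of_int (lam D) - rtD) * real_of_int u2"

lemma Itilde_polar_emb:
  "2 * real_of_int (Itilde_polar D u1 u2 v1 v2) = emb u1 u2 * emb' v1 v2 + emb' u1 u2 * emb v1 v2"
  by (simp add: Itilde_polar_def emb_def emb'_def algebra_simps flip: rtD_square)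

lemma qf_Itilde_emb: "real_of_int (qf (Itilde D) u1 u2) = emb u1 u2 * emb' u1 u2"
  using Itilde_polar_emb[of u1 u2 u1 u2] by (simp add: qf_Itilde algebra_simps)

lemma emb_det: "emb u1 u2 * emb' v1 v2 - emb' u1 u2 * emb v1 v2 = - 2 * rtD * real_of_int (u1 * v2 - v1 * u2)"
  by (simp add: emb_def emb'_def algebra_simps)

lemma emb_zmul: "emb (zmul1 D u1 u2 v1 v2) (zmul2 D u1 u2 v1 v2) = emb u1 u2 * emb v1 v2"
  and emb'_zmul: "emb' (zmul1 D u1 u2 v1 v2) (zmul2 D u1 u2 v1 v2) = emb' u1 u2 * emb' v1 v2"
  by (simp_all add: emb_def emb'_def zmul1_def zmul2_def power2_eq_square algebra_simps flip: rtD_square)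

abbreviation "\<alpha> k \<equiv> emb (p1 k) (q1 k)"

abbreviation "\<alpha>' k \<equiv> emb' (p1 k) (q1 k)"

abbreviation "\<beta> k \<equiv> emb (p2 k) (q2 k)"

abbreviation "\<beta>' k \<equiv> emb' (p2 k) (q2 k)"

lemma cyc_emb:
  assumes "cyc D k = (a,b,c)"
  shows "\<alpha> k * \<alpha>' k = a" "\<beta> k * \<beta>' k = c" "\<alpha> k * \<beta>' k = b - rtD" "\<alpha>' k * \<beta> k = b + rtD"
proof -
  have abc: "a = Itilde_polar D (p1 k) (q1 k) (p1 k) (q1 k)" "b = Itilde_polar D (p1 k) (q1 k) (p2 k) (q2 k)"
    "c = Itilde_polar D (p2 k) (q2 k) (p2 k) (q2 k)"
    using assms cyc_eq[of k] by simp_all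
  show "\<alpha> k * \<alpha>' k = a" "\<beta> k * \<beta>' k = c"
    using abc qf_Itilde_emb by (simp_all flip: qf_Itilde)
  have "\<alpha> k * \<beta>' k + \<alpha>' k * \<beta> k = 2 * b"
    using abc(2) Itilde_polar_emb by simp
  moreover have "\<alpha> k * \<beta>' k - \<alpha>' k * \<beta> k = - 2 * rtD"
    using emb_det[of "p1 k" "q1 k" "p2 k" "q2 k"] det_Lmat[of k] by (simp add: mult.commute)
  ultimately show "\<alpha> k * \<beta>' k = b - rtD" "\<alpha>' k * \<beta> k = b + rtD"
    by linarith+
qed

lemma alpha_ne_0: "\<alpha> k \<noteq> 0"
proof -
  obtain a b c where abc: "cyc D k = (a,b,c)"
    by (cases "cyc D k") auto
  show ?thesis
    using cyc_emb(1)[OF abc] reduced_abs_c_bounds(3)[OF reduced_cyc[of k, unfolded abc]] by auto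
qed

lemma abs_alpha_Suc: "\<bar>\<alpha> (Suc k)\<bar> = \<bar>\<beta> k\<bar>"
  by (simp add: Lmat_Suc_entries emb_def abs_minus_commute algebra_simps)

lemma abs_alpha_0: "\<bar>\<alpha> 0\<bar> = 1"
  by (simp add: emb_def p1_def q1_def one_mat22)

lemma abs_alpha_1: "\<bar>\<alpha> 1\<bar> \<ge> 2"
proof -
  have "\<bar>\<alpha> 1\<bar> = lam D + rtD"
    using abs_alpha_Suc[of 0] lam_bounds rtD_pos by (simp add: emb_def p2_def q2_def one_mat22)
  then show ?thesis
    using lam_bounds(1) rtD_ge_1 by simp
qed

lemma abs_alpha_growth: "\<bar>\<alpha> k\<bar> < \<bar>\<alpha> (Suc k)\<bar>" "\<bar>\<alpha> (Suc k)\<bar> \<le> 2 * rtD * \<bar>\<alpha> k\<bar>"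
proof -
  obtain a b c where abc: "cyc D k = (a,b,c)"
    by (cases "cyc D k") auto
  note red = reduced_cyc[of k, unfolded abc]
  have b: "0 < b" "real_of_int b < rtD" and a: "\<bar>real_of_int a\<bar> < rtD + b"
    using red by (auto simp: reduced_iff)
  have a1: "1 \<le> \<bar>real_of_int a\<bar>"
    using reduced_abs_c_bounds(3)[OF red] by linarith
  have "real_of_int a * \<beta> k = \<alpha> k * (b + rtD)"
    using cyc_emb(1,4)[OF abc] by (metis mult.assoc)
  then have "\<bar>real_of_int a\<bar> * \<bar>\<beta> k\<bar> = \<bar>\<alpha> k\<bar> * \<bar>b + rtD\<bar>"
    by (metis abs_mult)
  then have eq: "\<bar>real_of_int a\<bar> * \<bar>\<alpha> (Suc k)\<bar> = \<bar>\<alpha> k\<bar> * (rtD + b)"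
    using b rtD_pos by (simp add: abs_alpha_Suc add.commute)
  have pos: "\<bar>\<alpha> k\<bar> > 0"
    using alpha_ne_0 by simp
  have "\<bar>real_of_int a\<bar> * \<bar>\<alpha> k\<bar> < \<bar>real_of_int a\<bar> * \<bar>\<alpha> (Suc k)\<bar>"
    unfolding eq using a pos by (simp add: mult.commute)
  then show "\<bar>\<alpha> k\<bar> < \<bar>\<alpha> (Suc k)\<bar>"
    by (rule mult_left_less_imp_less) simp
  have "\<bar>real_of_int a\<bar> * \<bar>\<alpha> (Suc k)\<bar> \<le> \<bar>real_of_int a\<bar> * (2 * rtD * \<bar>\<alpha> k\<bar>)"
  proof -
    have "\<bar>\<alpha> k\<bar> * (rtD + b) \<le> 2 * rtD * \<bar>\<alpha> k\<bar>"
      using b pos by (simp add: mult.commute mult_left_mono)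
    also have "\<dots> \<le> \<bar>real_of_int a\<bar> * (2 * rtD * \<bar>\<alpha> k\<bar>)"
      using mult_right_mono[OF a1, of "2 * rtD * \<bar>\<alpha> k\<bar>"] rtD_pos by simp
    finally show ?thesis
      unfolding eq .
  qed
  then show "\<bar>\<alpha> (Suc k)\<bar> \<le> 2 * rtD * \<bar>\<alpha> k\<bar>"
    by (rule mult_left_le_imp_le) (use a1 in simp)
qed

lemma abs_alpha'_less: "\<bar>\<alpha>' k\<bar> < 2 * rtD / \<bar>\<alpha> k\<bar>"
proof -
  obtain a b c where abc: "cyc D k = (a,b,c)"
    by (cases "cyc D k") auto
  have "\<bar>\<alpha> k\<bar> * \<bar>\<alpha>' k\<bar> = \<bar>real_of_int a\<bar>"
    using cyc_emb(1)[OF abc] by (metis abs_mult)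
  also have "\<dots> < 2 * rtD"
    using reduced_cyc[of k, unfolded abc] by (auto simp: reduced_iff)
  finally show ?thesis
    using alpha_ne_0[of k] by (simp add: field_simps)
qed

lemma abs_beta'_le: "\<bar>\<beta>' k\<bar> \<le> \<bar>\<alpha>' k\<bar>"
proof -
  obtain a b c where abc: "cyc D k = (a,b,c)"
    by (cases "cyc D k") auto
  note red = reduced_cyc[of k, unfolded abc]
  have "real_of_int a * \<beta>' k = \<alpha>' k * (b - rtD)"
    using cyc_emb(1,3)[OF abc] by (metis mult.assoc mult.commute)
  then have "\<bar>real_of_int a\<bar> * \<bar>\<beta>' k\<bar> = \<bar>\<alpha>' k\<bar> * \<bar>b - rtD\<bar>"
    by (metis abs_mult)
  then have "\<bar>real_of_int a\<bar> * \<bar>\<beta>' k\<bar> = \<bar>\<alpha>' k\<bar> * (rtD - b)"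
    using red by (simp add: reduced_iff)
  also have "\<dots> \<le> \<bar>\<alpha>' k\<bar> * \<bar>real_of_int a\<bar>"
    using red by (intro mult_left_mono) (auto simp: reduced_iff)
  finally show ?thesis
    using reduced_abs_c_bounds(3)[OF red] by (simp add: mult.commute)
qed

section \<open>Composing \<open>Q\<^sup>(\<^sup>n\<^sup>)\<close> with itself\<close>

text \<open>The bilinear matrix of \<open>Q\<^sup>(\<^sup>n\<^sup>) \<circ> Q\<^sup>(\<^sup>n\<^sup>) = Q\<^sup>(\<^sup>m\<^sup>)\<close>:
  \<open>B\<^sub>0 (L\<^sub>n \<otimes> L\<^sub>n)\<close> multiplies \<open>L\<^sub>n x\<close> and \<open>L\<^sub>n y\<close> in \<open>\<int>[\<omega>]\<close>, and
  \<open>L\<^sub>m\<^sup>-\<^sup>1 = adj L\<^sub>m\<close> expresses the product in the coordinates of \<open>Q\<^sup>(\<^sup>m\<^sup>)\<close>.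
  This works for every \<open>m\<close>; only the size of the entries depends on \<open>m\<close>.\<close>

definition comp_mat :: "nat \<Rightarrow> nat \<Rightarrow> int mat" where
  "comp_mat n m = adj22 (Lmat D m) * (B0 D * kron (Lmat D n) (Lmat D n))"

lemma B0_kron_Lmat_carrier: "B0 D * kron (Lmat D n) (Lmat D n) \<in> carrier_mat 2 4"
  using B0_carrier kron_carrier[OF Lmat_carrier Lmat_carrier] by (rule mult_carrier_mat)

lemma adj22_Lmat: "adj22 (Lmat D m) = mat22 (q2 m) (- p2 m) (- q1 m) (p1 m)"
  by (simp add: adj22_def Lmat_eq_mat22)

lemma comp_mat_carrier: "comp_mat n m \<in> carrier_mat 2 4"
  unfolding comp_mat_def adj22_Lmat using mat22_carrier B0_kron_Lmat_carrier by (rule mult_carrier_mat)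

lemma Lmat_mult_comp_mat: "Lmat D m * comp_mat n m = B0 D * kron (Lmat D n) (Lmat D n)"
proof -
  have "Lmat D m * comp_mat n m = (Lmat D m * adj22 (Lmat D m)) * (B0 D * kron (Lmat D n) (Lmat D n))"
    unfolding comp_mat_def adj22_Lmat
    by (rule assoc_mult_mat[symmetric, OF Lmat_carrier mat22_carrier B0_kron_Lmat_carrier])
  also have "Lmat D m * adj22 (Lmat D m) = 1\<^sub>m 2"
    unfolding Lmat_eq_mat22 by (rule mult_adj22) (simp add: det22_def det_Lmat)
  finally show ?thesis
    using left_mult_one_mat[OF B0_kron_Lmat_carrier[of n]] by simp
qed

lemma qf_cyc_mult:
  fixes x1 x2 y1 y2 :: int
  defines "z \<equiv> vec_of_list [x1*y1, x1*y2, x2*y1, x2*y2]"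
  shows "qf (cyc D n) x1 x2 * qf (cyc D n) y1 y2 =
         qf (cyc D m) ((comp_mat n m *\<^sub>v z) $ 0) ((comp_mat n m *\<^sub>v z) $ 1)"
proof -
  have z: "z \<in> carrier_vec 4"
    by (simp add: z_def carrier_vecI)
  define v where "v = comp_mat n m *\<^sub>v z"
  have v: "v \<in> carrier_vec 2"
    unfolding v_def using comp_mat_carrier z by (rule mult_mat_vec_carrier)
  have Lv: "B0 D * kron (Lmat D n) (Lmat D n) *\<^sub>v z = Lmat D m *\<^sub>v v"
    unfolding v_def Lmat_mult_comp_mat[of m n, symmetric]
    by (rule assoc_mult_mat_vec[OF Lmat_carrier comp_mat_carrier z])
  have "qf (cyc D n) x1 x2 * qf (cyc D n) y1 y2 =
      qf (Itilde D) ((B0 D * kron (Lmat D n) (Lmat D n) *\<^sub>v z) $ 0) ((B0 D * kron (Lmat D n) (Lmat D n) *\<^sub>v z) $ 1)"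
    unfolding qf_cyc z_def B0_kron_mult_vec[OF Lmat_carrier Lmat_carrier] qf_Itilde_zmul
    by (simp add: Lmat_eq_mat22)
  also have "\<dots> = qf (Itilde D) ((Lmat D m *\<^sub>v v) $ 0) ((Lmat D m *\<^sub>v v) $ 1)"
    by (simp only: Lv)
  also have "\<dots> = qf (cyc D m) (v $ 0) (v $ 1)"
    using mat22_mult_vec[OF v] by (simp add: Lmat_eq_mat22 qf_cyc)
  finally show ?thesis
    unfolding v_def .
qed

lemma composition_identity:
  "qf (cyc D n) x1 x2 * qf (cyc D n) y1 y2 =
   (let z = vec_of_list [x1*y1, x1*y2, x2*y1, x2*y2]
    in z \<bullet> ((transpose_mat (comp_mat n m) * fmat (cyc D m) * comp_mat n m) *\<^sub>v z))"
  unfolding Let_def qf_cyc_mult[where m = m]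
  by (rule scalar_prod_congruent_form[OF comp_mat_carrier, symmetric]) (simp add: carrier_vecI)

lemma minors_comp_mat:
  assumes "cyc D n = (a,b,c)"
  shows "minor2 (comp_mat n m) 0 1 = a" "minor2 (comp_mat n m) 0 2 = a"
    "minor2 (comp_mat n m) 0 3 = 2 * b" "minor2 (comp_mat n m) 1 3 = c"
proof -
  have "minor2 (comp_mat n m) i k = minor2 (B0 D * kron (Lmat D n) (Lmat D n)) i k" if "i < 4" "k < 4" for i k
    unfolding comp_mat_def adj22_Lmat minor2_mult_mat22[OF B0_kron_Lmat_carrier that]
    using det_Lmat[of m] by (simp add: algebra_simps)
  then show "minor2 (comp_mat n m) 0 1 = a" "minor2 (comp_mat n m) 0 2 = a"
    "minor2 (comp_mat n m) 0 3 = 2 * b" "minor2 (comp_mat n m) 1 3 = c"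
    using assms cyc_eq[of n] det_Lmat[of n]
    by (simp_all add: Lmat_eq_mat22 minors_B0_kron minors_B0_kron[unfolded One_nat_def])
qed

text \<open>The minors \<open>a, 2b, c\<close> are coprime because \<open>Q\<^sup>(\<^sup>n\<^sup>)\<close> represents \<open>1\<close>, at
  \<open>(q\<^sub>2, -q\<^sub>1) = L\<^sub>n\<^sup>-\<^sup>1 (1,0)\<close>.\<close>

lemma Gcd_minors_comp_mat: "Gcd {minor2 (comp_mat n m) i k | i k. i < k \<and> k < 4} = 1"
proof -
  obtain a b c where abc: "cyc D n = (a,b,c)"
    by (cases "cyc D n") auto
  have "qf (cyc D n) (q2 n) (- q1 n) = 1"
    using det_Lmat[of n] by (simp add: qf_cyc qf_Itilde Itilde_polar_def algebra_simps)
  then have comb: "(q2 n)^2 * a + (- q1 n * q2 n) * (2 * b) + (q1 n)^2 * c = 1"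
    by (simp add: abc qf_def power2_eq_square algebra_simps)
  have A: "a \<in> {minor2 (comp_mat n m) i k | i k. i < k \<and> k < 4}"
    unfolding mem_Collect_eq using minors_comp_mat(1)[OF abc] by (intro exI[of _ 0] exI[of _ 1]) simp
  have B: "2 * b \<in> {minor2 (comp_mat n m) i k | i k. i < k \<and> k < 4}"
    unfolding mem_Collect_eq using minors_comp_mat(3)[OF abc] by (intro exI[of _ 0] exI[of _ 3]) simp
  have C: "c \<in> {minor2 (comp_mat n m) i k | i k. i < k \<and> k < 4}"
    unfolding mem_Collect_eq using minors_comp_mat(4)[OF abc] by (intro exI[of _ 1] exI[of _ 3]) simp
  show ?thesis
    using Gcd_eq_1_if_combination[OF A B C comb] .
qed

lemma composition_via_comp_mat: "composition_via (cyc D n) (cyc D n) (cyc D m) (comp_mat n m)"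
proof -
  obtain a b c where abc: "cyc D n = (a,b,c)"
    by (cases "cyc D n") auto
  have "a \<noteq> 0"
    using reduced_abs_c_bounds(3) reduced_cyc[of n] abc by metis
  then have "lead (cyc D n) * minor2 (comp_mat n m) 0 1 > 0" "lead (cyc D n) * minor2 (comp_mat n m) 0 2 > 0"
    unfolding abc lead_def minors_comp_mat[OF abc] by (auto simp: zero_less_mult_iff linorder_neq_iff)
  then show ?thesis
    unfolding composition_via_def using comp_mat_carrier composition_identity Gcd_minors_comp_mat by blast
qed

section \<open>Chains of compositions\<close>

definition log_alpha :: "nat \<Rightarrow> real" where "log_alpha k = ln \<bar>\<alpha> k\<bar>"

lemma log_alpha_0: "log_alpha 0 = 0"
  and log_alpha_less_Suc: "log_alpha k < log_alpha (Suc k)"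
  and log_alpha_Suc_le: "log_alpha (Suc k) \<le> log_alpha k + ln (2 * rtD)"
  and log_alpha_1: "ln 2 \<le> log_alpha 1"
proof -
  have pos: "\<bar>\<alpha> k\<bar> > 0" for k
    using alpha_ne_0 by simp
  show "log_alpha 0 = 0" "log_alpha k < log_alpha (Suc k)" "ln 2 \<le> log_alpha 1"
    unfolding log_alpha_def using abs_alpha_0 abs_alpha_growth(1) abs_alpha_1 pos by auto
  have "ln \<bar>\<alpha> (Suc k)\<bar> \<le> ln (2 * rtD * \<bar>\<alpha> k\<bar>)"
    using abs_alpha_growth(2)[of k] pos[of k] pos[of "Suc k"] rtD_pos by simp
  then show "log_alpha (Suc k) \<le> log_alpha k + ln (2 * rtD)"
    unfolding log_alpha_def using pos rtD_pos by (simp add: ln_mult)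
qed

text \<open>Since \<open>log_alpha\<close> grows by at most \<open>log (2\<surd>D)\<close> per step, \<open>doubling n m\<close> says that
  \<open>log_alpha m \<approx> 2 log_alpha n\<close>; this keeps the entries of \<open>comp_mat n m\<close> polynomial in \<open>D\<close>.\<close>

definition doubling :: "nat \<Rightarrow> nat \<Rightarrow> bool" where
  "doubling n m \<longleftrightarrow>
     \<bar>\<alpha> (Suc n)\<bar>^2 \<le> (2 * rtD)^3 * \<bar>\<alpha> m\<bar> \<and> \<bar>\<alpha> (Suc m)\<bar> \<le> (2 * rtD)^3 * \<bar>\<alpha> n\<bar>^2"

definition col_emb :: "nat \<Rightarrow> nat \<Rightarrow> real" where
  "col_emb n a = emb (Lmat D n $$ (0,a)) (Lmat D n $$ (1,a))"

definition col_emb' :: "nat \<Rightarrow> nat \<Rightarrow> real" where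
  "col_emb' n a = emb' (Lmat D n $$ (0,a)) (Lmat D n $$ (1,a))"

lemma Lmat_column_bounds:
  assumes "a < 2"
  shows "\<bar>col_emb n a\<bar> \<le> \<bar>\<alpha> (Suc n)\<bar>" "\<bar>col_emb' n a\<bar> \<le> 2 * rtD / \<bar>\<alpha> n\<bar>"
  using assms abs_alpha_growth(1)[of n] abs_alpha_Suc[of n] abs_alpha'_less[of n] abs_beta'_le[of n]
  by (auto simp: col_emb_def col_emb'_def Lmat_eq_mat22 less_2_cases)

lemma comp_mat_index:
  fixes n m k :: nat
  assumes "k < 4"
  defines "X \<equiv> B0 D * kron (Lmat D n) (Lmat D n)"
  shows "comp_mat n m $$ (0,k) = q2 m * X $$ (0,k) - p2 m * X $$ (1,k)"
    and "comp_mat n m $$ (1,k) = - q1 m * X $$ (0,k) + p1 m * X $$ (1,k)"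
  using index_mat22_mult[OF B0_kron_Lmat_carrier assms(1)]
  unfolding comp_mat_def adj22_Lmat X_def by simp_all

lemma comp_mat_index_emb:
  fixes n m k :: nat
  assumes "k < 4"
  defines "x \<equiv> col_emb n (k div 2) * col_emb n (k mod 2)"
    and "x' \<equiv> col_emb' n (k div 2) * col_emb' n (k mod 2)"
  shows "x * \<beta>' m - x' * \<beta> m = - (2 * rtD) * real_of_int (comp_mat n m $$ (0,k))"
    and "x' * \<alpha> m - x * \<alpha>' m = - (2 * rtD) * real_of_int (comp_mat n m $$ (1,k))"
proof -
  define X0 where "X0 = (B0 D * kron (Lmat D n) (Lmat D n)) $$ (0,k)"
  define X1 where "X1 = (B0 D * kron (Lmat D n) (Lmat D n)) $$ (1,k)"
  have X: "emb X0 X1 = x" "emb' X0 X1 = x'"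
    unfolding X0_def X1_def x_def x'_def col_emb_def col_emb'_def
    using B0_kron_index[OF Lmat_carrier[of n] Lmat_carrier[of n] \<open>k < 4\<close>, of D]
    by (simp_all del: index_mult_mat add: emb_zmul emb'_zmul)
  show "x * \<beta>' m - x' * \<beta> m = - (2 * rtD) * real_of_int (comp_mat n m $$ (0,k))"
    and "x' * \<alpha> m - x * \<alpha>' m = - (2 * rtD) * real_of_int (comp_mat n m $$ (1,k))"
    using emb_det[of X0 X1 "p2 m" "q2 m"] emb_det[of "p1 m" "q1 m" X0 X1]
    unfolding comp_mat_index[OF \<open>k < 4\<close>] X0_def[symmetric] X1_def[symmetric] X
    by (simp_all add: algebra_simps)
qed

lemma abs_le_64_D_cube:
  assumes "2 * rtD * \<bar>x\<bar> \<le> (2 * rtD)^4 + (2 * rtD)^5"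
  shows "\<bar>x\<bar> \<le> 64 * real_of_int D^3"
proof -
  have D1: "1 \<le> real_of_int D"
    using D_pos by simp
  have "(2 * rtD)^4 = 16 * real_of_int D^2" "(2 * rtD)^5 = 32 * real_of_int D^2 * rtD"
    by (simp_all add: power_mult_distrib power_numeral_reduce flip: rtD_square)
  moreover have "real_of_int D^2 * rtD \<le> real_of_int D^3" "real_of_int D^2 \<le> real_of_int D^3"
    using mult_left_mono[OF rtD_le_D, of "real_of_int D^2"] mult_left_mono[OF D1, of "real_of_int D^2"]
    by (simp_all add: power2_eq_square power3_eq_cube)
  moreover have "\<bar>x\<bar> \<le> 2 * rtD * \<bar>x\<bar>"
    using rtD_ge_1 by (simp add: mult_le_cancel_right1)
  ultimately show ?thesis
    using assms by linarith
qed

lemma comp_mat_entry_bound: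
  assumes "doubling n m" "i < 2" "k < 4"
  shows "\<bar>real_of_int (comp_mat n m $$ (i,k))\<bar> \<le> 64 * real_of_int D^3"
proof -
  define x where "x = col_emb n (k div 2) * col_emb n (k mod 2)"
  define x' where "x' = col_emb' n (k div 2) * col_emb' n (k mod 2)"
  have "k div 2 < 2" "k mod 2 < 2"
    using \<open>k < 4\<close> by auto
  note cols = Lmat_column_bounds[OF this(1)] Lmat_column_bounds[OF this(2)]
  have bound: "\<bar>x * u'\<bar> + \<bar>x' * u\<bar> \<le> (2 * rtD)^4 + (2 * rtD)^5"
    if "\<bar>u\<bar> \<le> \<bar>\<alpha> (Suc m)\<bar>" "\<bar>u'\<bar> \<le> 2 * rtD / \<bar>\<alpha> m\<bar>" for u u'
    unfolding x_def x'_def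
  proof (rule abs_products_le[OF _ _ _ cols that])
    show "1 \<le> 2 * rtD" "0 < \<bar>\<alpha> n\<bar>" "0 < \<bar>\<alpha> m\<bar>"
      using rtD_ge_1 alpha_ne_0 by simp_all
    show "\<bar>\<alpha> (Suc n)\<bar>^2 \<le> (2 * rtD)^3 * \<bar>\<alpha> m\<bar>" "\<bar>\<alpha> (Suc m)\<bar> \<le> (2 * rtD)^3 * \<bar>\<alpha> n\<bar>^2"
      using assms(1) unfolding doubling_def by simp_all
  qed
  note entries = comp_mat_index_emb[OF \<open>k < 4\<close>, of n m, folded x_def x'_def]
  have "2 * rtD * \<bar>real_of_int (comp_mat n m $$ (0,k))\<bar> = \<bar>x * \<beta>' m - x' * \<beta> m\<bar>"
    using rtD_pos by (simp add: entries abs_mult)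
  also have "\<dots> \<le> (2 * rtD)^4 + (2 * rtD)^5"
    using bound[of "\<beta> m" "\<beta>' m"] abs_alpha_Suc[of m] abs_beta'_le[of m] abs_alpha'_less[of m]
      abs_triangle_ineq4[of "x * \<beta>' m" "x' * \<beta> m"]
    by linarith
  finally have row0: "\<bar>real_of_int (comp_mat n m $$ (0,k))\<bar> \<le> 64 * real_of_int D^3"
    by (rule abs_le_64_D_cube)
  have "2 * rtD * \<bar>real_of_int (comp_mat n m $$ (1,k))\<bar> = \<bar>x' * \<alpha> m - x * \<alpha>' m\<bar>"
    using rtD_pos by (simp add: entries abs_mult)
  also have "\<dots> \<le> (2 * rtD)^4 + (2 * rtD)^5"
    using bound[of "\<alpha> m" "\<alpha>' m"] abs_alpha_growth(1)[of m] abs_alpha'_less[of m]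
      abs_triangle_ineq4[of "x' * \<alpha> m" "x * \<alpha>' m"]
    by linarith
  finally have row1: "\<bar>real_of_int (comp_mat n m $$ (1,k))\<bar> \<le> 64 * real_of_int D^3"
    by (rule abs_le_64_D_cube)
  show ?thesis
    using row0 row1 \<open>i < 2\<close> by (auto simp: less_2_cases)
qed

lemma lg_mnorm_comp_mat:
  assumes "doubling n m"
  shows "lg (real_of_int (mnorm (comp_mat n m))) \<le> 6 * lg (real_of_int D)"
proof -
  have D1: "1 \<le> real_of_int D"
    using D_pos by simp
  have "\<bar>comp_mat n m $$ (i,k)\<bar> \<le> 64 * D^3" if "i < 2" "k < 4" for i k
  proof -
    have "real_of_int \<bar>comp_mat n m $$ (i,k)\<bar> \<le> real_of_int (64 * D^3)"
      using comp_mat_entry_bound[OF assms that] by simp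
    then show ?thesis
      by (simp only: of_int_le_iff)
  qed
  then have "mnorm (comp_mat n m) \<le> 64 * D^3"
    by (intro mnorm_le[OF comp_mat_carrier]) auto
  moreover have "0 \<le> mnorm (comp_mat n m)"
    by (rule mnorm_nonneg[OF comp_mat_carrier]) auto
  ultimately have "real_of_int \<bar>mnorm (comp_mat n m)\<bar> \<le> real_of_int (64 * D^3)"
    by (simp only: of_int_le_iff abs_of_nonneg)
  then have "\<bar>real_of_int (mnorm (comp_mat n m))\<bar> \<le> 64 * real_of_int D^3"
    by simp
  moreover have "4 \<le> 64 * real_of_int D^3"
    using one_le_power[OF D1, of 3] by linarith
  ultimately have "lg (real_of_int (mnorm (comp_mat n m))) \<le> log 2 (64 * real_of_int D^3)"
    by (rule lg_le_log)
  also have "\<dots> = 6 + 3 * log 2 (real_of_int D)"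
    using D1 log_powr_cancel[of 2 6] by (simp add: log_mult log_nat_power)
  also have "\<dots> \<le> 6 * lg (real_of_int D)"
    using lg_ge_2[of "real_of_int D"] log_le_lg[of "real_of_int D"] D1 by simp
  finally show ?thesis .
qed

lemma doubling_if_log_alpha:
  assumes "2 * log_alpha (Suc n) \<le> log_alpha m + 3 * ln (2 * rtD)" "log_alpha (Suc m) \<le> 2 * log_alpha n + 3 * ln (2 * rtD)"
  shows "doubling n m"
proof -
  have pos: "\<bar>\<alpha> k\<bar> > 0" for k
    using alpha_ne_0 by simp
  have "0 < (2 * rtD)^3" "0 < \<bar>\<alpha> n\<bar>^2"
    using rtD_pos pos by simp_all
  then have "ln (\<bar>\<alpha> (Suc n)\<bar>^2) = 2 * log_alpha (Suc n)" "ln ((2 * rtD)^3 * \<bar>\<alpha> m\<bar>) = 3 * ln (2 * rtD) + log_alpha m"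
    "ln ((2 * rtD)^3 * \<bar>\<alpha> n\<bar>^2) = 3 * ln (2 * rtD) + 2 * log_alpha n"
    unfolding log_alpha_def using pos[of m] by (simp_all only: ln_mult_pos ln_realpow of_nat_numeral)
  then have "ln (\<bar>\<alpha> (Suc n)\<bar>^2) \<le> ln ((2 * rtD)^3 * \<bar>\<alpha> m\<bar>)"
    "ln \<bar>\<alpha> (Suc m)\<bar> \<le> ln ((2 * rtD)^3 * \<bar>\<alpha> n\<bar>^2)"
    using assms unfolding log_alpha_def by linarith+
  then show ?thesis
    unfolding doubling_def using pos rtD_pos by simp
qed

lemma log_alpha_le: "log_alpha j \<le> 14 * real_of_int D^2" if "j \<le> cyc_period D"
proof -
  have "log_alpha j \<le> real j * ln (2 * rtD)"
  proof (induction j)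
    case (Suc j)
    then show ?case
      using log_alpha_Suc_le[of j] by (simp add: algebra_simps)
  qed (simp add: log_alpha_0)
  also have "\<dots> \<le> (7 * real_of_int D) * (2 * real_of_int D)"
  proof (rule mult_mono)
    show "real j \<le> 7 * real_of_int D"
      using that cyc_period_le D_pos by (simp flip: of_nat_le_iff)
    have "ln (2 * rtD) < 2 * rtD"
      using rtD_pos by (intro ln_less_self) simp
    then show "ln (2 * rtD) \<le> 2 * real_of_int D"
      using rtD_le_D by linarith
  qed (use rtD_ge_1 D_pos in simp_all)
  finally show ?thesis
    by (simp add: power2_eq_square)
qed

lemma log_alpha_nonneg: "0 \<le> log_alpha j"
  using lift_Suc_mono_le[of log_alpha, OF less_imp_le[OF log_alpha_less_Suc], of 0 j] log_alpha_0 by simp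

lemma log_alpha_div_power_less:
  assumes "j \<le> cyc_period D" "64 * real_of_int D^2 \<le> 2^N"
  shows "log_alpha j / 2^N < log_alpha 1"
proof -
  have "log_alpha j / 2^N \<le> 14 * real_of_int D^2 / (64 * real_of_int D^2)"
    using log_alpha_le[OF assms(1)] assms(2) log_alpha_nonneg D_pos by (intro frac_le) auto
  also have "\<dots> = 7 / 32"
    using D_pos by simp
  also have "\<dots> < ln (1 + 1/2)"
    using ln_one_plus_pos_lower_bound[of "1/2::real"] by (simp add: power2_eq_square)
  also have "\<dots> \<le> ln 2"
    by simp
  also have "\<dots> \<le> log_alpha 1"
    by (rule log_alpha_1)
  finally show ?thesis .
qed

lemma doubling_chain:
  assumes "j \<le> cyc_period D"
  obtains N idx where "idx 0 = 0" "idx N = j" "\<And>t. t < N \<Longrightarrow> doubling (idx t) (idx (Suc t))"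
    "real N \<le> 6 * (lg (real_of_int D))^2"
proof -
  obtain N where N: "64 * real_of_int D^2 \<le> 2^N" "real N \<le> 6 * (lg (real_of_int D))^2"
    using exponent_bound_lg[of "real_of_int D"] D_pos by auto
  define ns where "ns t = last_below log_alpha j (log_alpha j / 2^t)" for t
  have "ns N = 0"
    unfolding ns_def using log_alpha_div_power_less[OF assms N(1)] log_alpha_nonneg log_alpha_0
    by (intro last_below_eq_0 log_alpha_less_Suc) auto
  moreover have "ns 0 = j"
    unfolding ns_def using last_below_self log_alpha_less_Suc by simp
  moreover have step: "doubling (ns (Suc t)) (ns t)" for t
  proof (rule doubling_if_log_alpha)
    have "log_alpha j * 1 \<le> log_alpha j * 2^t"
      using log_alpha_nonneg by (intro mult_left_mono) simp_all
    then have "2 * (log_alpha j / 2^Suc t) \<le> log_alpha j"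
      by (simp add: divide_le_eq)
    then show "2 * log_alpha (Suc (ns (Suc t))) \<le> log_alpha (ns t) + 3 * ln (2 * rtD)"
      "log_alpha (Suc (ns t)) \<le> 2 * log_alpha (ns (Suc t)) + 3 * ln (2 * rtD)"
      using last_below_double[OF log_alpha_less_Suc log_alpha_Suc_le log_alpha_0, of "log_alpha j / 2^Suc t" j]
        log_alpha_nonneg
      unfolding ns_def by simp_all
  qed
  moreover have "doubling (ns (N - t)) (ns (N - Suc t))" if "t < N" for t
    using step[of "N - Suc t"] that by (simp add: Suc_diff_Suc)
  ultimately show thesis
    using that[of "\<lambda>t. ns (N - t)" N] N(2) by simp
qed

end

definition composition_step ::
  "int \<Rightarrow> real \<Rightarrow> (nat \<Rightarrow> form) \<Rightarrow> (nat \<Rightarrow> int mat) \<Rightarrow> nat \<Rightarrow> bool" where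
  "composition_step D C Qs Vs k \<longleftrightarrow>
     (\<exists>k1 k2 B. k1 \<le> k \<and> k2 \<le> k \<and> composition_via (Qs k1) (Qs k2) (Qs (Suc k)) B \<and>
        Vs (Suc k) * B = B0 D * kron (Vs k1) (Vs k2) \<and>
        lg (real_of_int (mnorm B)) \<le> C * lg (real_of_int D))"

context nonsquare_det
begin

lemma composition_chain:
  assumes "j \<le> cyc_period D"
  shows "\<exists>K Qs Vs. (\<forall>k\<le>K. reduced D (Qs k) \<and> Vs k \<in> carrier_mat 2 2) \<and>
    Qs 0 = Itilde D \<and> Vs 0 = 1\<^sub>m 2 \<and> (\<forall>k<K. composition_step D 6 Qs Vs k) \<and>
    Qs K = cyc D j \<and> Vs K = Lmat D j \<and> real K \<le> 6 * (lg (real_of_int D))^2"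
proof -
  obtain idx N where idx: "idx 0 = 0" "idx N = j" "\<And>t. t < N \<Longrightarrow> doubling (idx t) (idx (Suc t))"
    "real N \<le> 6 * (lg (real_of_int D))^2"
    using doubling_chain[OF assms] by metis
  have "composition_step D 6 (\<lambda>t. cyc D (idx t)) (\<lambda>t. Lmat D (idx t)) t" if "t < N" for t
    unfolding composition_step_def
    using composition_via_comp_mat Lmat_mult_comp_mat lg_mnorm_comp_mat[OF idx(3)[OF that]] by blast
  then show ?thesis
    using idx reduced_cyc Lmat_carrier
    by (intro exI[of _ N] exI[of _ "\<lambda>t. cyc D (idx t)"] exI[of _ "\<lambda>t. Lmat D (idx t)"]) (simp add: cyc_def)
qed

end

theorem lemma6p4:
  "\<exists>C::real. \<forall>(D::int) (j::nat).
     0 < D \<longrightarrow> \<not> (\<exists>n::int. D = n^2) \<longrightarrow> 1 \<le> j \<longrightarrow> j \<le> cyc_period D \<longrightarrow>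
     (\<exists>(K::nat) (Qs::nat \<Rightarrow> form) (Vs::nat \<Rightarrow> int mat).
        (\<forall>k\<le>K. reduced D (Qs k) \<and> Vs k \<in> carrier_mat 2 2) \<and>
        Qs 0 = Itilde D \<and> Vs 0 = 1\<^sub>m 2 \<and>
        (\<forall>k<K.
           (Qs (Suc k) = right_nb D (Qs k) \<and>
            fmat (Qs (Suc k)) = transpose_mat (rn_S D (Qs k)) * fmat (Qs k) * rn_S D (Qs k) \<and>
            Vs (Suc k) = Vs k * rn_S D (Qs k) \<and>
            lg (real_of_int (mnorm (rn_S D (Qs k)))) \<le> 1/2 * lg (real_of_int D))
           \<or>
           (\<exists>k1 k2 B. k1 \<le> k \<and> k2 \<le> k \<and>
              composition_via (Qs k1) (Qs k2) (Qs (Suc k)) B \<and>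
              Vs (Suc k) * B = B0 D * kron (Vs k1) (Vs k2) \<and>
              lg (real_of_int (mnorm B)) \<le> C * lg (real_of_int D))) \<and>
        Qs K = cyc D j \<and> Vs K = Lmat D j \<and>
        real K \<le> C * (lg (real_of_int D))^2)"
  apply (intro exI[of _ "6::real"] allI impI)
  subgoal premises prems for D j
    using nonsquare_det.composition_chain[OF _ prems(4)] prems(1,2)
    unfolding nonsquare_det_def composition_step_def by blast
  done

end
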